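(* Let $v\ge 2$ and $k\ge 3$ be integers with $v\not\equiv 2\pmod 4$. Then there exists an AOA$(1,k-1,k,v)$.
   Context: An orthogonal array OA$(t,k,v)$ (with $1\le t\le k$) is a $v^t\times k$ array with entries from a set $X$ of size $v$ such that, for every choice of $t$ of its columns, each $t$-tuple in $X^t$ appears exactly once as a row of the corresponding $v^t\times t$ subarray. For integers $1\le s\le t\le k$, an augmented orthogonal array AOA$(s,t,k,v)$ is a $v^t\times(k+1)$ array $A$ such that: (1) the first $k$ columns of $A$ form an OA$(t,k,v)$ on a symbol set $X$ of size $v$; (2) the last column of $A$ has entries from a set $Y$ of size $v^{t-s}$; (3) for any choice of $s$ of the first $k$ columns, these $s$ columns together with the last column contain every $(s+1)$-tuple of $X^s\times Y$ exactly once as a row. *)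

theory Defs
  imports "HOL-Library.FuncSet"
begin

text \<open>An array with N rows and k columns is represented by a function
  A :: nat => nat => 'a, where A i c is the entry in row i < N, column c < k.
  A t-tuple indexed by a set C of t columns is a function in C ->E X.\<close>

definition is_OA :: "nat \<Rightarrow> nat \<Rightarrow> nat \<Rightarrow> 'a set \<Rightarrow> (nat \<Rightarrow> nat \<Rightarrow> 'a) \<Rightarrow> bool" where
  "is_OA t k v X A \<longleftrightarrow>
     1 \<le> t \<and> t \<le> k \<and> finite X \<and> card X = v \<and>
     (\<forall>i < v ^ t. \<forall>c < k. A i c \<in> X) \<and>
     (\<forall>C. C \<subseteq> {0..<k} \<and> card C = t \<longrightarrow>
        (\<forall>f \<in> C \<rightarrow>\<^sub>E X. \<exists>!i. i < v ^ t \<and> (\<forall>c\<in>C. A i c = f c)))"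

text \<open>Augmented orthogonal array AOA(s,t,k,v): the v^t x (k+1) array whose first
  k columns are given by A (over X) and whose last column is L (over Y).\<close>

definition is_AOA :: "nat \<Rightarrow> nat \<Rightarrow> nat \<Rightarrow> nat \<Rightarrow> 'a set \<Rightarrow> 'b set
    \<Rightarrow> (nat \<Rightarrow> nat \<Rightarrow> 'a) \<Rightarrow> (nat \<Rightarrow> 'b) \<Rightarrow> bool" where
  "is_AOA s t k v X Y A L \<longleftrightarrow>
     1 \<le> s \<and> s \<le> t \<and> t \<le> k \<and>
     is_OA t k v X A \<and>
     finite Y \<and> card Y = v ^ (t - s) \<and>
     (\<forall>i < v ^ t. L i \<in> Y) \<and>
     (\<forall>C. C \<subseteq> {0..<k} \<and> card C = s \<longrightarrow>
        (\<forall>f \<in> C \<rightarrow>\<^sub>E X. \<forall>y \<in> Y.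
           \<exists>!i. i < v ^ t \<and> (\<forall>c\<in>C. A i c = f c) \<and> L i = y))"

end

theory Submission
  imports Defs "HOL-Library.Function_Algebras"
begin

text \<open>Write \<open>v = m 2\<^sup>e\<close> with \<open>m\<close> odd; \<open>v \<noteq> 2 (mod 4)\<close> means \<open>e \<noteq> 1\<close>, and then the abelian
  group \<open>G = \<int>\<^sub>m \<times> \<int>\<^sub>2\<^sup>e\<close> of order \<open>v\<close> has an orthomorphism \<open>\<theta>\<close>: both \<open>\<theta>\<close> and \<open>a \<mapsto> a + \<theta> a\<close>
  permute \<open>G\<close>. The rows of the array are the words \<open>x \<in> G\<^sup>k\<close> with zero sum; any \<open>k - 1\<close> entries of
  such a word determine the remaining one, which gives the OA of strength \<open>k - 1\<close>. The extra
  column records the differences \<open>x\<^sub>j - \<phi>\<^sub>j(x\<^sub>0)\<close> for \<open>0 < j < k - 1\<close>, where \<open>\<phi>\<^sub>j\<close> is the identity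
  for even and negation for odd \<open>j\<close>, except that \<open>\<phi>\<^sub>k\<^sub>-\<^sub>2 = \<theta>\<close> for odd \<open>k\<close>. Once this label is fixed,
  every entry is a permutation of \<open>x\<^sub>0\<close>: entry \<open>j < k - 1\<close> is a translate of \<open>\<phi>\<^sub>j\<close>, and the last
  entry is, up to translation and negation, the sum of the \<open>\<phi>\<^sub>j\<close> over \<open>j < k - 1\<close>, which is the
  identity for even \<open>k\<close> and \<open>a \<mapsto> a + \<theta> a\<close> for odd \<open>k\<close>. So every column together with the label is orthogonal.\<close>

lemma ex1_bij_betw_reindex:
  assumes "bij_betw g I R" and "\<exists>!r. r \<in> R \<and> P r"
  shows "\<exists>!i. i \<in> I \<and> P (g i)"
proof -
  obtain r where r: "r \<in> R" "P r" and uniq: "\<And>r'. r' \<in> R \<Longrightarrow> P r' \<Longrightarrow> r' = r"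
    using assms(2) by blast
  obtain i where i: "i \<in> I" "g i = r"
    using assms(1) r(1) unfolding bij_betw_def by blast
  show ?thesis
  proof (rule ex1I[of _ i])
    show "i \<in> I \<and> P (g i)" using i r by simp
  next
    fix j assume "j \<in> I \<and> P (g j)"
    then have "g j = g i" using uniq i assms(1) by (auto simp: bij_betw_def)
    then show "j = i" using \<open>j \<in> I \<and> P (g j)\<close> i assms(1) by (auto simp: bij_betw_def inj_on_def)
  qed
qed

lemma PiE_bij_betw_relabel:
  assumes h: "bij_betw h X V" and f: "f \<in> C \<rightarrow>\<^sub>E V"
  obtains f' where "f' \<in> C \<rightarrow>\<^sub>E X" and "\<And>c x. c \<in> C \<Longrightarrow> x \<in> X \<Longrightarrow> h x = f c \<longleftrightarrow> x = f' c"
proof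
  show "(\<lambda>c\<in>C. inv_into X h (f c)) \<in> C \<rightarrow>\<^sub>E X"
    using f h by (auto simp: bij_betw_def PiE_iff intro: inv_into_into)
  show "h x = f c \<longleftrightarrow> x = (\<lambda>c\<in>C. inv_into X h (f c)) c" if c: "c \<in> C" and x: "x \<in> X" for c x
  proof -
    obtain x' where "x' \<in> X" "f c = h x'" using c f h by (auto simp: bij_betw_def)
    moreover have "inj_on h X" using h by (simp add: bij_betw_def)
    ultimately show ?thesis using c x by (simp add: inv_into_f_f inj_on_eq_iff)
  qed
qed

lemma ex1_index_relabel:
  fixes N :: nat
  assumes g: "bij_betw g {0..<N} R" and h: "bij_betw h X V"
    and col: "\<And>r c. r \<in> R \<Longrightarrow> c \<in> C \<Longrightarrow> col r c \<in> X" and f: "f \<in> C \<rightarrow>\<^sub>E V"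
    and unique_row: "\<And>f'. f' \<in> C \<rightarrow>\<^sub>E X \<Longrightarrow> \<exists>!r. r \<in> R \<and> (\<forall>c\<in>C. col r c = f' c) \<and> Q r"
  shows "\<exists>!i. i < N \<and> (\<forall>c\<in>C. h (col (g i) c) = f c) \<and> Q (g i)"
proof -
  obtain f' where f': "f' \<in> C \<rightarrow>\<^sub>E X"
    and relabel: "\<And>c x. c \<in> C \<Longrightarrow> x \<in> X \<Longrightarrow> h x = f c \<longleftrightarrow> x = f' c"
    using PiE_bij_betw_relabel[OF h f] by blast
  have "\<exists>!i. i \<in> {0..<N} \<and> (\<forall>c\<in>C. col (g i) c = f' c) \<and> Q (g i)"
    using ex1_bij_betw_reindex[OF g unique_row[OF f']] by simp
  moreover have "h (col (g i) c) = f c \<longleftrightarrow> col (g i) c = f' c" if "i < N" "c \<in> C" for i c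
  proof -
    have "g i \<in> R"
      by (rule bij_betw_apply[OF g]) (use that(1) in simp)
    then show ?thesis
      using relabel[OF that(2) col[OF _ that(2)]] by simp
  qed
  then have "(\<lambda>i. i \<in> {0..<N} \<and> (\<forall>c\<in>C. col (g i) c = f' c) \<and> Q (g i))
           = (\<lambda>i. i < N \<and> (\<forall>c\<in>C. h (col (g i) c) = f c) \<and> Q (g i))"
    by (intro ext) auto
  ultimately show ?thesis
    by simp
qed

lemma ex_AOA_from_rows:
  fixes X :: "'a set" and Y :: "'b set" and R :: "'r set"
    and col :: "'r \<Rightarrow> nat \<Rightarrow> 'a" and lab :: "'r \<Rightarrow> 'b"
  assumes "1 \<le> s" "s \<le> t" "t \<le> k"
    and "finite X" "card X = v" and "finite Y" "card Y = v ^ (t - s)"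
    and "finite R" "card R = v ^ t"
    and col: "\<And>r c. r \<in> R \<Longrightarrow> c < k \<Longrightarrow> col r c \<in> X"
    and lab: "\<And>r. r \<in> R \<Longrightarrow> lab r \<in> Y"
    and OA: "\<And>C f. C \<subseteq> {0..<k} \<Longrightarrow> card C = t \<Longrightarrow> f \<in> C \<rightarrow>\<^sub>E X \<Longrightarrow>
               \<exists>!r. r \<in> R \<and> (\<forall>c\<in>C. col r c = f c)"
    and AOA: "\<And>C f y. C \<subseteq> {0..<k} \<Longrightarrow> card C = s \<Longrightarrow> f \<in> C \<rightarrow>\<^sub>E X \<Longrightarrow> y \<in> Y \<Longrightarrow>
               \<exists>!r. r \<in> R \<and> (\<forall>c\<in>C. col r c = f c) \<and> lab r = y"
  shows "\<exists>(X' :: nat set) (Y' :: nat set) (A :: nat \<Rightarrow> nat \<Rightarrow> nat) (L :: nat \<Rightarrow> nat).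
           is_AOA s t k v X' Y' A L"
proof -
  obtain g where g: "bij_betw g {0..<v ^ t} R"
    using ex_bij_betw_nat_finite \<open>finite R\<close> \<open>card R = v ^ t\<close> by metis
  obtain hX where hX: "bij_betw hX X {0..<v}"
    using ex_bij_betw_finite_nat \<open>finite X\<close> \<open>card X = v\<close> by metis
  obtain hY where hY: "bij_betw hY Y {0..<v ^ (t - s)}"
    using ex_bij_betw_finite_nat \<open>finite Y\<close> \<open>card Y = v ^ (t - s)\<close> by metis
  define A where "A i c = hX (col (g i) c)" for i c
  define L where "L i = hY (lab (g i))" for i
  have row: "g i \<in> R" if "i < v ^ t" for i
    using g that by (auto simp: bij_betw_def)
  have col_C: "\<And>r c. r \<in> R \<Longrightarrow> c \<in> C \<Longrightarrow> col r c \<in> X" if "C \<subseteq> {0..<k}" for C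
    using col that by auto
  have "is_AOA s t k v {0..<v} {0..<v ^ (t - s)} A L"
    unfolding is_AOA_def is_OA_def
  proof (intro conjI allI impI ballI)
    show "A i c \<in> {0..<v}" if "i < v ^ t" "c < k" for i c
      using hX col[OF row[OF that(1)] that(2)] unfolding A_def bij_betw_def by auto
    show "L i \<in> {0..<v ^ (t - s)}" if "i < v ^ t" for i
      using hY lab[OF row[OF that]] unfolding L_def bij_betw_def by auto
    show "\<exists>!i. i < v ^ t \<and> (\<forall>c\<in>C. A i c = f c)"
      if C: "C \<subseteq> {0..<k} \<and> card C = t" and f: "f \<in> C \<rightarrow>\<^sub>E {0..<v}" for C f
    proof -
      have "\<exists>!i. i < v ^ t \<and> (\<forall>c\<in>C. A i c = f c) \<and> True"
        unfolding A_def using C OA by (intro ex1_index_relabel[OF g hX col_C[of C] f]) simp_all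
      then show ?thesis
        by simp
    qed
    show "\<exists>!i. i < v ^ t \<and> (\<forall>c\<in>C. A i c = f c) \<and> L i = y"
      if C: "C \<subseteq> {0..<k} \<and> card C = s" and f: "f \<in> C \<rightarrow>\<^sub>E {0..<v}"
        and y: "y \<in> {0..<v ^ (t - s)}" for C f y
    proof -
      obtain y' where y': "y' \<in> Y" "hY y' = y"
        using hY y by (metis bij_betw_imp_surj_on imageE)
      have "hY (lab r) = y \<longleftrightarrow> lab r = y'" if "r \<in> R" for r
        using bij_betw_imp_inj_on[OF hY] lab[OF that] y' by (auto simp: inj_on_eq_iff)
      then have "\<exists>!r. r \<in> R \<and> (\<forall>c\<in>C. col r c = f' c) \<and> hY (lab r) = y" if "f' \<in> C \<rightarrow>\<^sub>E X" for f'
        using AOA[of C f' y'] C that y'(1) by (simp cong: conj_cong)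
      then show ?thesis
        unfolding A_def L_def using C by (intro ex1_index_relabel[OF g hX col_C[of C] f]) simp_all
    qed
  qed (use assms(1-3) in auto)
  then show ?thesis
    by blast
qed

lemma lessThan_card_pred_subsetE:
  assumes "C \<subseteq> {..<k}" and "card C = k - 1" and "0 < k"
  obtains m where "m < k" and "C = {..<k} - {m}"
proof -
  have "card ({..<k} - C) = 1"
    using assms by (simp add: card_Diff_subset finite_subset)
  then obtain m where m: "{..<k} - C = {m}"
    using card_1_singletonE by blast
  then have "m < k" by blast
  moreover have "C = {..<k} - {m}"
    using m assms(1) by blast
  ultimately show thesis by (rule that)
qed

text \<open>An abelian group presented by canonical representatives inside an ambient group:
  \<open>red\<close> picks the representative of a coset, the representatives form \<open>range red\<close>, and
  their group law is \<open>\<lambda>a b. red (a + b)\<close>.\<close>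

locale residue_system =
  fixes red :: "'a::ab_group_add \<Rightarrow> 'a"
  assumes red_add_red_left: "red (red u + w) = red (u + w)"
begin

abbreviation residues :: "'a set" where
  "residues \<equiv> range red"

lemma red_red [simp]: "red (red u) = red u"
  using red_add_red_left[of u 0] by simp

lemma red_residue: "a \<in> residues \<Longrightarrow> red a = a"
  by auto

lemma red_add_red_right: "red (u + red w) = red (u + w)"
  using red_add_red_left[of w u] by (simp add: add.commute)

lemma red_minus_red: "red (- red u) = red (- u)"
  using red_add_red_left[of u "- u - red u"] by (simp add: algebra_simps)

lemma red_diff_red_left: "red (red u - w) = red (u - w)"
  using red_add_red_left[of u "- w"] by simp

lemma red_sum_red: "red (\<Sum>c\<in>A. red (f c)) = red (\<Sum>c\<in>A. f c)"
proof (induction A rule: infinite_finite_induct)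
  case (insert x F)
  have "red (\<Sum>c\<in>insert x F. red (f c)) = red (f x + red (\<Sum>c\<in>F. red (f c)))"
    using insert.hyps by (simp add: red_add_red_left red_add_red_right)
  also have "\<dots> = red (\<Sum>c\<in>insert x F. f c)"
    using insert by (simp add: red_add_red_right)
  finally show ?case .
qed simp_all

lemma bij_betw_red_add: "bij_betw (\<lambda>b. red (w + b)) residues residues"
  by (rule bij_betw_byWitness[where f' = "\<lambda>b. red (- w + b)"]) (auto simp: red_add_red_right red_diff_red_left)

lemma bij_betw_red_minus: "bij_betw (\<lambda>b. red (- b)) residues residues"
  by (rule bij_betw_byWitness[where f' = "\<lambda>b. red (- b)"]) (auto simp: red_minus_red)

definition orthomorphism :: "('a \<Rightarrow> 'a) \<Rightarrow> bool" where
  "orthomorphism \<theta> \<longleftrightarrow>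
     bij_betw \<theta> residues residues \<and> bij_betw (\<lambda>a. red (a + \<theta> a)) residues residues"

lemma red_alternating_sum:
  assumes "a \<in> residues"
  shows "red (\<Sum>j<(n::nat). if even j then a else red (- a)) = (if even n then red 0 else a)"
proof (induction n)
  case (Suc n)
  have "red (\<Sum>j<Suc n. if even j then a else red (- a))
        = red (red (\<Sum>j<n. if even j then a else red (- a)) + (if even n then a else red (- a)))"
    by (simp add: red_add_red_left)
  also have "\<dots> = (if even (Suc n) then red 0 else a)"
    using assms by (auto simp: Suc.IH red_add_red_left red_add_red_right)
  finally show ?case .
qed simp

end

locale orthomorphism_AOA = residue_system red for red :: "'a::ab_group_add \<Rightarrow> 'a" +
  fixes \<theta> :: "'a \<Rightarrow> 'a" and k :: nat
  assumes orthomorphism: "orthomorphism \<theta>" and three_le_k: "3 \<le> k"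
begin

definition phi :: "nat \<Rightarrow> 'a \<Rightarrow> 'a" where
  "phi j a = (if odd k \<and> j = k - 2 then \<theta> a else if even j then a else red (- a))"

definition rows :: "(nat \<Rightarrow> 'a) set" where
  "rows = {x \<in> {..<k} \<rightarrow>\<^sub>E residues. red (\<Sum>c<k. x c) = red 0}"

definition complete :: "nat \<Rightarrow> (nat \<Rightarrow> 'a) \<Rightarrow> nat \<Rightarrow> 'a" where
  "complete m z = (\<lambda>c\<in>{..<k}. if c = m then red (- (\<Sum>c'\<in>{..<k} - {m}. z c')) else z c)"

definition labels :: "(nat \<Rightarrow> 'a) set" where
  "labels = {..<k - 2} \<rightarrow>\<^sub>E residues"

definition label :: "(nat \<Rightarrow> 'a) \<Rightarrow> nat \<Rightarrow> 'a" where
  "label x = (\<lambda>j\<in>{..<k - 2}. red (x (Suc j) - phi (Suc j) (x 0)))"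

definition row :: "(nat \<Rightarrow> 'a) \<Rightarrow> 'a \<Rightarrow> nat \<Rightarrow> 'a" where
  "row y a = complete (k - 1) (\<lambda>c. red ((if c = 0 then 0 else y (c - 1)) + phi c a))"

lemma rows_residue: "x \<in> rows \<Longrightarrow> c < k \<Longrightarrow> x c \<in> residues"
  using PiE_mem[of x "{..<k}" "\<lambda>_. residues" c] by (simp add: rows_def)

lemma complete_cong:
  assumes "\<And>c. c < k \<Longrightarrow> c \<noteq> m \<Longrightarrow> z c = z' c"
  shows "complete m z = complete m z'"
  unfolding complete_def using assms by (intro restrict_ext) (auto intro!: sum.cong)

lemma complete_in_rows:
  assumes "m < k" and "\<And>c. c < k \<Longrightarrow> c \<noteq> m \<Longrightarrow> z c \<in> residues"
  shows "complete m z \<in> rows"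
proof -
  define S where "S = (\<Sum>c\<in>{..<k} - {m}. z c)"
  have "(\<Sum>c<k. complete m z c) = complete m z m + (\<Sum>c\<in>{..<k} - {m}. complete m z c)"
    using assms(1) sum.remove[of "{..<k}" m "complete m z"] by simp
  also have "\<dots> = red (- S) + S"
    using assms(1) unfolding S_def complete_def by (auto intro!: sum.cong)
  finally have "red (\<Sum>c<k. complete m z c) = red 0"
    by (simp add: red_add_red_left)
  moreover have "complete m z \<in> {..<k} \<rightarrow>\<^sub>E residues"
    using assms(2) by (auto simp: complete_def)
  ultimately show ?thesis by (simp add: rows_def)
qed

lemma complete_rows:
  assumes x: "x \<in> rows" and "m < k"
  shows "complete m x = x"
proof (rule ext)
  fix c
  have x_PiE: "x \<in> {..<k} \<rightarrow>\<^sub>E residues" and x_sum: "red (\<Sum>c<k. x c) = red 0"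
    using x by (simp_all add: rows_def)
  define S where "S = (\<Sum>c\<in>{..<k} - {m}. x c)"
  have "red (x m + S) = red 0"
    using x_sum sum.remove[of "{..<k}" m x] \<open>m < k\<close> unfolding S_def by simp
  then have "red (- S) = red (red (x m + S) - S)"
    by (simp add: red_diff_red_left)
  also have "\<dots> = red (x m)"
    by (simp add: red_diff_red_left)
  also have "\<dots> = x m"
    using PiE_mem[OF x_PiE, of m] \<open>m < k\<close> by (intro red_residue) simp
  finally have "complete m x m = x m"
    using \<open>m < k\<close> by (simp add: complete_def S_def)
  moreover have "complete m x c = x c" if "c \<noteq> m"
    using that PiE_arb[OF x_PiE, of c] by (simp add: complete_def)
  ultimately show "complete m x c = x c"
    by (cases "c = m") simp_all
qed

lemma rows_unique_completion:
  assumes "m < k" and f: "f \<in> ({..<k} - {m}) \<rightarrow>\<^sub>E residues"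
  shows "\<exists>!x. x \<in> rows \<and> (\<forall>c\<in>{..<k} - {m}. x c = f c)"
proof (rule ex1I[of _ "complete m f"])
  have "complete m f \<in> rows"
    using \<open>m < k\<close> PiE_mem[OF f] by (intro complete_in_rows) auto
  then show "complete m f \<in> rows \<and> (\<forall>c\<in>{..<k} - {m}. complete m f c = f c)"
    by (simp add: complete_def)
next
  fix x assume x: "x \<in> rows \<and> (\<forall>c\<in>{..<k} - {m}. x c = f c)"
  then have "x = complete m x"
    using complete_rows \<open>m < k\<close> by simp
  also have "\<dots> = complete m f"
    using x by (intro complete_cong) auto
  finally show "x = complete m f" .
qed

lemma bij_betw_restrict_rows:
  "bij_betw (\<lambda>x. restrict x {..<k - 1}) rows ({..<k - 1} \<rightarrow>\<^sub>E residues)"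
proof (rule bij_betw_byWitness[where f' = "complete (k - 1)"])
  have k: "k - 1 < k"
    using three_le_k by simp
  show "\<forall>x\<in>rows. complete (k - 1) (restrict x {..<k - 1}) = x"
  proof
    fix x assume "x \<in> rows"
    have "complete (k - 1) (restrict x {..<k - 1}) = complete (k - 1) x"
      by (intro complete_cong) auto
    also have "\<dots> = x"
      using complete_rows[OF \<open>x \<in> rows\<close> k] .
    finally show "complete (k - 1) (restrict x {..<k - 1}) = x" .
  qed
  show "\<forall>f\<in>{..<k - 1} \<rightarrow>\<^sub>E residues. restrict (complete (k - 1) f) {..<k - 1} = f"
  proof
    fix f assume f: "f \<in> {..<k - 1} \<rightarrow>\<^sub>E residues"
    show "restrict (complete (k - 1) f) {..<k - 1} = f"
    proof (rule ext)
      fix c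
      show "restrict (complete (k - 1) f) {..<k - 1} c = f c"
      proof (cases "c < k - 1")
        case False
        then show ?thesis using PiE_arb[OF f, of c] by simp
      qed (auto simp: complete_def)
    qed
  qed
  show "(\<lambda>x. restrict x {..<k - 1}) ` rows \<subseteq> {..<k - 1} \<rightarrow>\<^sub>E residues"
  proof (rule image_subsetI)
    fix x assume "x \<in> rows"
    then show "restrict x {..<k - 1} \<in> {..<k - 1} \<rightarrow>\<^sub>E residues"
      using rows_residue by simp
  qed
  show "complete (k - 1) ` ({..<k - 1} \<rightarrow>\<^sub>E residues) \<subseteq> rows"
  proof (rule image_subsetI)
    fix f assume f: "f \<in> {..<k - 1} \<rightarrow>\<^sub>E residues"
    show "complete (k - 1) f \<in> rows"
      using k PiE_mem[OF f] by (intro complete_in_rows) simp_all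
  qed
qed

lemma phi_0: "phi 0 a = a"
  using three_le_k by (simp add: phi_def)

lemma bij_betw_phi: "bij_betw (phi j) residues residues"
proof -
  have "phi j = (if odd k \<and> j = k - 2 then \<theta> else if even j then id else (\<lambda>a. red (- a)))"
    by (auto simp: phi_def fun_eq_iff)
  then show ?thesis
    using orthomorphism bij_betw_red_minus unfolding orthomorphism_def by simp
qed

lemma red_sum_phi:
  assumes a: "a \<in> residues"
  shows "red (\<Sum>j<k - 1. phi j a) = (if even k then a else red (a + \<theta> a))"
proof (cases "even k")
  case True
  then have "red (\<Sum>j<k - 1. phi j a) = red (\<Sum>j<k - 1. if even j then a else red (- a))"
    by (simp add: phi_def)
  also have "\<dots> = a"
    using red_alternating_sum[OF a, of "k - 1"] True three_le_k by simp
  finally show ?thesis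
    using True by simp
next
  case False
  have "{..<k - 1} = insert (k - 2) {..<k - 2}"
    using three_le_k by auto
  then have "red (\<Sum>j<k - 1. phi j a) = red (\<theta> a + (\<Sum>j<k - 2. if even j then a else red (- a)))"
    using False by (simp add: phi_def)
  also have "\<dots> = red (\<theta> a + red (\<Sum>j<k - 2. if even j then a else red (- a)))"
    by (simp add: red_add_red_right)
  also have "\<dots> = red (a + \<theta> a)"
    using red_alternating_sum[OF a, of "k - 2"] False three_le_k by (simp add: add.commute)
  finally show ?thesis
    using False by simp
qed

lemma bij_betw_sum_phi: "bij_betw (\<lambda>a. red (\<Sum>j<k - 1. phi j a)) residues residues"
proof -
  have "bij_betw (if even k then id else (\<lambda>a. red (a + \<theta> a))) residues residues"
    using orthomorphism unfolding orthomorphism_def by simp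
  then show ?thesis
    by (rule bij_betw_cong[THEN iffD1, rotated]) (use red_sum_phi in simp)
qed

lemma row_less:
  assumes "c < k - 1"
  shows "row y a c = red ((if c = 0 then 0 else y (c - 1)) + phi c a)"
  using assms by (auto simp: row_def complete_def)

lemma row_last:
  "row y a (k - 1) = red (- (\<Sum>c<k - 1. red ((if c = 0 then 0 else y (c - 1)) + phi c a)))"
proof -
  have "{..<k} - {k - 1} = {..<k - 1}" "k - 1 < k"
    using three_le_k by auto
  then show ?thesis
    by (simp add: row_def complete_def)
qed

lemma row_in_rows: "row y a \<in> rows"
  unfolding row_def using three_le_k by (intro complete_in_rows) auto

lemma row_0:
  assumes "a \<in> residues"
  shows "row y a 0 = a"
  using three_le_k red_residue[OF assms] by (simp add: row_less phi_0)

lemma label_row: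
  assumes y: "y \<in> labels" and a: "a \<in> residues"
  shows "label (row y a) = y"
proof (rule ext)
  fix j
  show "label (row y a) j = y j"
  proof (cases "j < k - 2")
    case True
    then have "label (row y a) j = red (red (y j + phi (Suc j) a) - phi (Suc j) a)"
      by (simp add: label_def row_less row_0[OF a])
    also have "\<dots> = y j"
    proof -
      have "y j \<in> residues"
        using True y PiE_mem[of y "{..<k - 2}" "\<lambda>_. residues" j] by (simp add: labels_def)
      then show ?thesis
        using red_residue[of "y j"] by (simp add: red_diff_red_left)
    qed
    finally show ?thesis .
  next
    case False
    then show ?thesis
      using y PiE_arb[of y "{..<k - 2}" "\<lambda>_. residues" j] by (simp add: label_def labels_def)
  qed
qed

lemma row_label:
  assumes x: "x \<in> rows"
  shows "row (label x) (x 0) = x"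
proof -
  have "row (label x) (x 0) = complete (k - 1) x"
    unfolding row_def
  proof (rule complete_cong)
    fix c assume "c < k" "c \<noteq> k - 1"
    then show "red ((if c = 0 then 0 else label x (c - 1)) + phi c (x 0)) = x c"
      using red_residue[OF rows_residue[OF x \<open>c < k\<close>]] by (auto simp: label_def phi_0 red_add_red_left)
  qed
  also have "\<dots> = x"
    using complete_rows[OF x] three_le_k by simp
  finally show ?thesis .
qed

lemma bij_betw_row_column:
  assumes "c < k"
  shows "bij_betw (\<lambda>a. row y a c) residues residues"
proof (cases "c < k - 1")
  case True
  define w where "w = (if c = 0 then 0 else y (c - 1))"
  have "bij_betw ((\<lambda>b. red (w + b)) \<circ> phi c) residues residues"
    by (rule bij_betw_trans[OF bij_betw_phi bij_betw_red_add])
  then show ?thesis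
    by (rule bij_betw_cong[THEN iffD1, rotated]) (simp add: row_less[OF True] w_def)
next
  case False
  then have c: "c = k - 1"
    using assms by simp
  define W where "W = (\<Sum>c<k - 1. if c = 0 then 0 else y (c - 1))"
  have "row y a c = red (- red (W + red (\<Sum>j<k - 1. phi j a)))" for a
  proof -
    have "red (\<Sum>c<k - 1. red ((if c = 0 then 0 else y (c - 1)) + phi c a))
          = red (W + red (\<Sum>j<k - 1. phi j a))"
      by (simp add: red_sum_red red_add_red_right sum.distrib W_def)
    then show ?thesis
      unfolding c row_last by (metis red_minus_red)
  qed
  moreover have "bij_betw ((\<lambda>b. red (- b)) \<circ> ((\<lambda>b. red (W + b)) \<circ> (\<lambda>a. red (\<Sum>j<k - 1. phi j a))))
                   residues residues"
    by (rule bij_betw_trans[OF bij_betw_trans[OF bij_betw_sum_phi bij_betw_red_add] bij_betw_red_minus])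
  ultimately show ?thesis
    by (simp add: comp_def)
qed

lemma ex1_row_entry_label:
  assumes "c < k" and "b \<in> residues" and "y \<in> labels"
  shows "\<exists>!x. x \<in> rows \<and> x c = b \<and> label x = y"
proof -
  have bij: "bij_betw (\<lambda>a. row y a c) residues residues"
    using bij_betw_row_column[OF \<open>c < k\<close>] .
  then obtain a where a: "a \<in> residues" "row y a c = b"
    using \<open>b \<in> residues\<close> unfolding bij_betw_def by (metis imageE)
  show ?thesis
  proof (rule ex1I[of _ "row y a"])
    show "row y a \<in> rows \<and> row y a c = b \<and> label (row y a) = y"
      using a row_in_rows label_row[OF \<open>y \<in> labels\<close> a(1)] by simp
  next
    fix x assume x: "x \<in> rows \<and> x c = b \<and> label x = y"
    then have x_row: "x = row y (x 0)"
      using row_label by metis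
    have "x 0 \<in> residues"
      using x three_le_k rows_residue by simp
    moreover have "row y (x 0) c = row y a c"
      using x x_row a(2) by metis
    ultimately have "x 0 = a"
      using bij a(1) unfolding bij_betw_def inj_on_def by blast
    then show "x = row y a"
      using x_row by simp
  qed
qed

lemma card_rows: "card rows = card residues ^ (k - 1)"
  using bij_betw_same_card[OF bij_betw_restrict_rows] by (simp add: card_PiE)

lemma ex_AOA:
  assumes "finite residues"
  shows "\<exists>(X :: nat set) (Y :: nat set) (A :: nat \<Rightarrow> nat \<Rightarrow> nat) (L :: nat \<Rightarrow> nat).
           is_AOA 1 (k - 1) k (card residues) X Y A L"
proof (rule ex_AOA_from_rows[where X = residues and Y = labels and R = rows
      and col = "\<lambda>x c. x c" and lab = label])
  show "1 \<le> (1::nat)" "1 \<le> k - 1" "k - 1 \<le> k" "card residues = card residues"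
    using three_le_k by auto
  show "finite residues" "finite labels"
    using assms by (simp_all add: labels_def finite_PiE)
  show "card labels = card residues ^ (k - 1 - 1)"
    by (simp add: labels_def card_PiE numeral_2_eq_2)
  show "finite rows"
  proof (rule finite_subset)
    show "rows \<subseteq> {..<k} \<rightarrow>\<^sub>E residues"
      by (auto simp: rows_def)
    show "finite ({..<k} \<rightarrow>\<^sub>E residues)"
      using assms by (simp add: finite_PiE)
  qed
  show "card rows = card residues ^ (k - 1)"
    by (rule card_rows)
  show "x c \<in> residues" if "x \<in> rows" "c < k" for x c
    using rows_residue that .
  show "label x \<in> labels" if "x \<in> rows" for x
    by (simp add: label_def labels_def)
  show "\<exists>!x. x \<in> rows \<and> (\<forall>c\<in>C. x c = f c)"
    if C: "C \<subseteq> {0..<k}" "card C = k - 1" and f: "f \<in> C \<rightarrow>\<^sub>E residues" for C f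
  proof -
    have "C \<subseteq> {..<k}"
      using C(1) by auto
    then obtain m where "m < k" "C = {..<k} - {m}"
      by (rule lessThan_card_pred_subsetE[OF _ C(2)]) (use three_le_k in auto)
    then show ?thesis
      using rows_unique_completion f by simp
  qed
  show "\<exists>!x. x \<in> rows \<and> (\<forall>c\<in>C. x c = f c) \<and> label x = y"
    if C: "C \<subseteq> {0..<k}" "card C = 1" and f: "f \<in> C \<rightarrow>\<^sub>E residues" and y: "y \<in> labels"
    for C f y
  proof -
    obtain c where "C = {c}"
      using C(2) card_1_singletonE by blast
    then show ?thesis
      using ex1_row_entry_label[of c "f c" y] C f y by auto
  qed
qed

end

lemma bij_betw_finite_endo: "finite A \<Longrightarrow> f ` A \<subseteq> A \<Longrightarrow> inj_on f A \<Longrightarrow> bij_betw f A A"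
  by (simp add: bij_betw_def endo_inj_surj)

lemma mod_odd_double_inj:
  fixes x y :: int
  assumes "odd m" and "0 \<le> x" "x < int m" "0 \<le> y" "y < int m"
    and "(x + x) mod int m = (y + y) mod int m"
  shows "x = y"
proof (rule ccontr)
  assume "x \<noteq> y"
  have "int m dvd 2 * (x - y)"
    using assms(6) by (simp add: mod_eq_dvd_iff algebra_simps)
  moreover have "coprime (int m) 2"
    using \<open>odd m\<close> by simp
  ultimately have "int m dvd x - y"
    using coprime_dvd_mult_right_iff by blast
  then have "\<bar>int m\<bar> \<le> \<bar>x - y\<bar>"
    using \<open>x \<noteq> y\<close> by (intro dvd_imp_le_int) simp_all
  then show False
    using assms(2-5) by simp
qed

lemma bit_add_mod_2_eq_iff:
  fixes x y x' y' :: int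
  assumes "x \<in> {0, 1}" "y \<in> {0, 1}" "x' \<in> {0, 1}" "y' \<in> {0, 1}"
    and "(x + y) mod 2 = (x' + y') mod 2"
  shows "x = x' \<longleftrightarrow> y = y'"
  using assms by auto

lemma bit_add3_mod_2_neq:
  fixes x y z x' y' z' :: int
  assumes "x \<in> {0, 1}" "y \<in> {0, 1}" "z \<in> {0, 1}" "x' \<in> {0, 1}" "y' \<in> {0, 1}" "z' \<in> {0, 1}"
    and "x \<noteq> x'" "y \<noteq> y'" "z \<noteq> z'"
  shows "(x + y + z) mod 2 \<noteq> (x' + y' + z') mod 2"
  using assms by auto

text \<open>\<open>\<int>\<^sub>m \<times> \<int>\<^sub>2\<^sup>e\<close>, with coordinate \<open>0\<close> for \<open>\<int>\<^sub>m\<close>.\<close>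

definition vec_modulus :: "nat \<Rightarrow> nat \<Rightarrow> int" where
  "vec_modulus m i = (if i = 0 then int m else 2)"

definition vec_reduce :: "nat \<Rightarrow> nat \<Rightarrow> (nat \<Rightarrow> int) \<Rightarrow> nat \<Rightarrow> int" where
  "vec_reduce m e x = (\<lambda>i\<in>{..e}. x i mod vec_modulus m i)"

abbreviation vec_residues :: "nat \<Rightarrow> nat \<Rightarrow> (nat \<Rightarrow> int) set" where
  "vec_residues m e \<equiv> \<Pi>\<^sub>E i\<in>{..e}. {0..<vec_modulus m i}"

interpretation Zm_Z2e: residue_system "vec_reduce m e" for m e
  by unfold_locales (auto simp: vec_reduce_def mod_add_left_eq intro!: restrict_ext)

lemma range_vec_reduce:
  assumes "0 < m"
  shows "range (vec_reduce m e) = vec_residues m e"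
proof
  have pos: "0 < vec_modulus m i" for i
    using assms by (simp add: vec_modulus_def)
  have "vec_reduce m e x \<in> vec_residues m e" for x
    by (simp add: vec_reduce_def pos)
  then show "range (vec_reduce m e) \<subseteq> vec_residues m e"
    by blast
  show "vec_residues m e \<subseteq> range (vec_reduce m e)"
  proof
    fix a assume a: "a \<in> vec_residues m e"
    have "vec_reduce m e a = a"
    proof (rule PiE_ext[OF _ a])
      show "vec_reduce m e a \<in> vec_residues m e"
        by fact
      show "vec_reduce m e a i = a i" if "i \<in> {..e}" for i
        using that PiE_mem[OF a that] by (simp add: vec_reduce_def)
    qed
    then show "a \<in> range (vec_reduce m e)"
      by (metis rangeI)
  qed
qed

lemma card_range_vec_reduce:
  assumes "0 < m"
  shows "card (range (vec_reduce m e)) = m * 2 ^ e"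
proof -
  have "(\<Prod>i\<le>n. card {0..<vec_modulus m i}) = m * 2 ^ n" for n
    by (induction n) (simp_all add: vec_modulus_def)
  then show ?thesis
    using assms by (simp add: range_vec_reduce card_PiE)
qed

lemma finite_range_vec_reduce: "0 < m \<Longrightarrow> finite (range (vec_reduce m e))"
  by (simp add: range_vec_reduce finite_PiE)

lemma vec_residue_0:
  assumes "a \<in> vec_residues m e"
  shows "0 \<le> a 0 \<and> a 0 < int m"
  using PiE_mem[OF assms, of 0] by (simp add: vec_modulus_def)

lemma vec_residue_bit:
  assumes "a \<in> vec_residues m e" and "0 < i" "i \<le> e"
  shows "a i \<in> {0, 1}"
  using PiE_mem[OF assms(1), of i] assms(2,3) by (auto simp: vec_modulus_def)

text \<open>On \<open>\<int>\<^sub>2\<^sup>e\<close> (\<open>e \<ge> 2\<close>), \<open>lfsr_step\<close> is the companion map of \<open>x\<^sup>e + x + 1\<close> over \<open>\<int>\<^sub>2\<close>; it and its sum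
  with the identity are invertible because this polynomial takes the value \<open>1\<close> at \<open>0\<close> and at \<open>1\<close>.
  On \<open>\<int>\<^sub>m\<close> it is the identity, whose double is invertible as \<open>m\<close> is odd.\<close>

definition lfsr_step :: "nat \<Rightarrow> (nat \<Rightarrow> int) \<Rightarrow> nat \<Rightarrow> int" where
  "lfsr_step e a = (\<lambda>i\<in>{..e}. if i = 0 then a 0 else if i < e then a (Suc i) else (a 1 + a 2) mod 2)"

lemma lfsr_step_in:
  assumes a: "a \<in> vec_residues m e"
  shows "lfsr_step e a \<in> vec_residues m e"
  unfolding lfsr_step_def
proof (rule iffD2[OF restrict_PiE_iff], intro ballI)
  fix i assume "i \<in> {..e}"
  then show "(if i = 0 then a 0 else if i < e then a (Suc i) else (a 1 + a 2) mod 2)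
             \<in> {0..<vec_modulus m i}"
    using vec_residue_0[OF a] vec_residue_bit[OF a, of "Suc i"] by (auto simp: vec_modulus_def)
qed

lemma inj_on_lfsr_step:
  assumes "e \<noteq> 1"
  shows "inj_on (lfsr_step e) (vec_residues m e)"
proof (rule inj_onI)
  fix a b
  assume a: "a \<in> vec_residues m e"
    and b: "b \<in> vec_residues m e"
    and eq: "lfsr_step e a = lfsr_step e b"
  have coord: "lfsr_step e a i = lfsr_step e b i" for i
    using eq by simp
  have shifted: "a (Suc i) = b (Suc i)" if "0 < i" "i < e" for i
    using coord[of i] that by (simp add: lfsr_step_def)
  have high: "a j = b j" if "2 \<le> j" "j \<le> e" for j
    using shifted[of "j - 1"] that by simp
  show "a = b"
  proof (rule PiE_ext[OF a b])
    fix i assume "i \<in> {..e}"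
    consider "i = 0" | "i = 1" | "2 \<le> i"
      by linarith
    then show "a i = b i"
    proof cases
      case 1
      then show ?thesis using coord[of 0] by (simp add: lfsr_step_def)
    next
      case 2
      with \<open>i \<in> {..e}\<close> assms have e: "2 \<le> e"
        by auto
      then have "(a 1 + a 2) mod 2 = (b 1 + b 2) mod 2"
        using coord[of e] by (simp add: lfsr_step_def)
      then have "(a 1 + a 2) mod 2 = (b 1 + a 2) mod 2"
        using high[of 2] e by simp
      then show ?thesis
        using 2 e vec_residue_bit[OF a, of 1] vec_residue_bit[OF b, of 1] vec_residue_bit[OF a, of 2]
        by (auto dest: bit_add_mod_2_eq_iff)
    next
      case 3
      then show ?thesis using high \<open>i \<in> {..e}\<close> by simp
    qed
  qed
qed

lemma bits_eq_if_add_lfsr_eq: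
  fixes a b :: "nat \<Rightarrow> int"
  assumes e: "2 \<le> e"
    and bit: "\<And>i. 0 < i \<Longrightarrow> i \<le> e \<Longrightarrow> a i \<in> {0, 1} \<and> b i \<in> {0, 1}"
    and adjacent: "\<And>n. 0 < n \<Longrightarrow> n < e \<Longrightarrow> (a n + a (Suc n)) mod 2 = (b n + b (Suc n)) mod 2"
    and wrap: "(a e + a 1 + a 2) mod 2 = (b e + b 1 + b 2) mod 2"
    and i: "0 < i" "i \<le> e"
  shows "a i = b i"
proof -
  have chain: "a j = b j \<longleftrightarrow> a e = b e" if "0 < j" "j \<le> e" for j
    using \<open>j \<le> e\<close>
  proof (induction j rule: inc_induct)
    case (step n)
    have "a n = b n \<longleftrightarrow> a (Suc n) = b (Suc n)"
      using bit[of n] bit[of "Suc n"] adjacent[of n] step.hyps \<open>0 < j\<close>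
      by (intro bit_add_mod_2_eq_iff) simp_all
    then show ?case
      using step.IH by simp
  qed simp
  have "a e = b e"
  proof (rule ccontr)
    assume ne: "a e \<noteq> b e"
    then have "a 1 \<noteq> b 1" "a 2 \<noteq> b 2"
      using chain[of 1] chain[of 2] e by simp_all
    then show False
      using bit[of e] bit[of 1] bit[of 2] ne e wrap bit_add3_mod_2_neq by simp
  qed
  then show ?thesis
    using chain[OF i] by simp
qed

lemma inj_on_add_lfsr_step:
  assumes "odd m" and "e \<noteq> 1"
  shows "inj_on (\<lambda>a. vec_reduce m e (a + lfsr_step e a)) (vec_residues m e)"
proof (rule inj_onI)
  fix a b
  assume a: "a \<in> vec_residues m e"
    and b: "b \<in> vec_residues m e"
    and eq: "vec_reduce m e (a + lfsr_step e a) = vec_reduce m e (b + lfsr_step e b)"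
  have coord: "(a i + lfsr_step e a i) mod vec_modulus m i = (b i + lfsr_step e b i) mod vec_modulus m i"
    if "i \<le> e" for i
    using fun_cong[OF eq, of i] that by (simp add: vec_reduce_def)
  have "(a 0 + a 0) mod int m = (b 0 + b 0) mod int m"
    using coord[of 0] by (simp add: lfsr_step_def vec_modulus_def)
  then have zero: "a 0 = b 0"
    using vec_residue_0[OF a] vec_residue_0[OF b] mod_odd_double_inj[OF \<open>odd m\<close>] by blast
  have "a i = b i" if "0 < i" "i \<le> e" for i
  proof -
    have e: "2 \<le> e"
      using that assms(2) by simp
    show ?thesis
    proof (rule bits_eq_if_add_lfsr_eq[OF e _ _ _ that])
      show "a j \<in> {0, 1} \<and> b j \<in> {0, 1}" if "0 < j" "j \<le> e" for j
        using vec_residue_bit[OF a that] vec_residue_bit[OF b that] by simp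
      show "(a n + a (Suc n)) mod 2 = (b n + b (Suc n)) mod 2" if "0 < n" "n < e" for n
        using coord[of n] that by (simp add: lfsr_step_def vec_modulus_def)
      have "(a e + (a 1 + a 2) mod 2) mod 2 = (b e + (b 1 + b 2) mod 2) mod 2"
        using coord[of e] e by (simp add: lfsr_step_def vec_modulus_def)
      then show "(a e + a 1 + a 2) mod 2 = (b e + b 1 + b 2) mod 2"
        by (simp add: mod_add_right_eq add.assoc)
    qed
  qed
  then show "a = b"
    using zero by (intro PiE_ext[OF a b]) (metis atMost_iff bot_nat_0.not_eq_extremum)
qed

lemma orthomorphism_lfsr_step:
  assumes "odd m" and "e \<noteq> 1"
  shows "Zm_Z2e.orthomorphism m e (lfsr_step e)"
proof -
  have "0 < m"
    using \<open>odd m\<close> by (simp add: odd_pos)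
  have "finite (vec_residues m e)"
    using finite_range_vec_reduce[OF \<open>0 < m\<close>] by (simp add: range_vec_reduce[OF \<open>0 < m\<close>])
  moreover have "lfsr_step e ` vec_residues m e \<subseteq> vec_residues m e"
    using lfsr_step_in by blast
  moreover have "(\<lambda>a. vec_reduce m e (a + lfsr_step e a)) ` vec_residues m e \<subseteq> vec_residues m e"
    using range_vec_reduce[OF \<open>0 < m\<close>] by blast
  ultimately show ?thesis
    unfolding Zm_Z2e.orthomorphism_def range_vec_reduce[OF \<open>0 < m\<close>]
    using inj_on_lfsr_step[OF \<open>e \<noteq> 1\<close>] inj_on_add_lfsr_step[OF assms]
    by (simp add: bij_betw_finite_endo)
qed

lemma odd_times_power_of_two_decomposition:
  fixes v :: nat
  assumes "0 < v"
  obtains e m where "v = m * 2 ^ e" and "odd m"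
  using assms
proof (induction v arbitrary: thesis rule: less_induct)
  case (less v)
  show ?case
  proof (cases "odd v")
    case True
    then show ?thesis
      using less.prems(1)[where e = 0 and m = v] by simp
  next
    case False
    then obtain w where w: "v = 2 * w"
      by blast
    then have "0 < w" "w < v"
      using less.prems(2) by auto
    then obtain e m where "w = m * 2 ^ e" "odd m"
      using less.IH by blast
    then show ?thesis
      using less.prems(1)[where e = "Suc e" and m = m] w by simp
  qed
qed

theorem theorem2p3:
  fixes v k :: nat
  assumes "v \<ge> 2" and "k \<ge> 3" and "v mod 4 \<noteq> 2"
  shows "\<exists>(X :: nat set) (Y :: nat set) (A :: nat \<Rightarrow> nat \<Rightarrow> nat) (L :: nat \<Rightarrow> nat).
           is_AOA 1 (k - 1) k v X Y A L"
proof -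
  obtain e m where v: "v = m * 2 ^ e" and "odd m"
    by (rule odd_times_power_of_two_decomposition[of v]) (use assms(1) in auto)
  have "e \<noteq> 1"
  proof
    assume "e = 1"
    with v \<open>odd m\<close> have "v mod 4 = 2"
      by (auto elim!: oddE) presburger
    with assms(3) show False ..
  qed
  have "0 < m"
    using \<open>odd m\<close> by (simp add: odd_pos)
  interpret orthomorphism_AOA "vec_reduce m e" "lfsr_step e" k
    using orthomorphism_lfsr_step[OF \<open>odd m\<close> \<open>e \<noteq> 1\<close>] assms(2) by unfold_locales
  show ?thesis
    using ex_AOA[OF finite_range_vec_reduce[OF \<open>0 < m\<close>]] card_range_vec_reduce[OF \<open>0 < m\<close>] v
    by simp
qed

end
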